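(* Let $\mathcal{T}$ be a tangle of order $k$ in a connectivity system $(E,\lambda)$, and let $(R,G)$ be a $\mathcal{T}$-strong $k$-separation of $\lambda$. (i) If $A\subseteq G$ is a non-empty $\mathcal{T}$-weak set such that $R\cup A$ is $k$-separating, and $G-A$ is $\mathcal{T}$-strong, then $(R,G)$ is $\mathcal{T}$-equivalent to $(R\cup A, G-A)$. (ii) If $(R,G)$ is a non-sequential $k$-separation, and $A\subseteq G$ is a non-empty $\mathcal{T}$-weak set such that $R\cup A$ is $k$-separating, then $(R\cup A, G-A)$ is $\mathcal{T}$-equivalent to $(R,G)$. (iii) If $(R,G)$ is a non-sequential $k$-separation, then $(\mathrm{fcl}_{\mathcal{T}}(R), E-\mathrm{fcl}_{\mathcal{T}}(R))$ is $\mathcal{T}$-equivalent to $(R,G)$. (iv) If $(R,G)$ is a non-sequential $k$-separation, and $X$ is a $k$-separating set such that $E-\mathrm{fcl}_{\mathcal{T}}(G)\subseteq X\subseteq R$, then $(X,E-X)$ is $\mathcal{T}$-equivalent to $(R,G)$.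
   Context: A connectivity system is a pair $(E,\lambda)$ with $E$ finite and $\lambda$ an integer-valued symmetric submodular function on subsets of $E$. $X$ is $k$-separating if $\lambda(X)\le k$; a $k$-separation is an unordered partition $(X,E-X)$ with $\lambda(X)\le k$. A tangle of order $k$ is a collection $\mathcal T$ of subsets of $E$ with (T1) $\lambda(A)<k$ for $A\in\mathcal T$; (T2) if $\lambda(A)\le k-1$ then $A\in\mathcal T$ or $E-A\in\mathcal T$; (T3) $A\cup B\cup C\ne E$ for $A,B,C\in\mathcal T$; (T4) $E-\{e\}\notin\mathcal T$ for $e\in E$. A set is $\mathcal T$-weak if contained in a member of $\mathcal T$, and $\mathcal T$-strong otherwise; a $k$-separation is $\mathcal T$-strong if both parts are. A $\mathcal T$-strong $k$-separating set $X$ is fully closed if $X\cup Y$ is not $k$-separating for every nonempty $\mathcal T$-weak $Y\subseteq E-X$; $\mathrm{fcl}_{\mathcal T}(X)$ is the intersection of all fully closed $k$-separating sets containing $X$. $\mathcal T$-strong $k$-separations $(X,Y),(X',Y')$ are $\mathcal T$-equivalent if $\{\mathrm{fcl}_{\mathcal T}(X),\mathrm{fcl}_{\mathcal T}(Y)\}=\{\mathrm{fcl}_{\mathcal T}(X'),\mathrm{fcl}_{\mathcal T}(Y')\}$. A $k$-separating set $X$ is $\mathcal T$-sequential if $E-X$ is $\mathcal T$-strong and $\mathrm{fcl}_{\mathcal T}(E-X)=E$; a $k$-separation is non-sequential if neither part is $\mathcal T$-sequential. *)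

theory Defs
  imports Main
begin

definition connectivity_system :: "'a set \<Rightarrow> ('a set \<Rightarrow> int) \<Rightarrow> bool" where
  "connectivity_system E lam \<longleftrightarrow> finite E
     \<and> (\<forall>X. X \<subseteq> E \<longrightarrow> lam X = lam (E - X))
     \<and> (\<forall>X Y. X \<subseteq> E \<longrightarrow> Y \<subseteq> E \<longrightarrow> lam X + lam Y \<ge> lam (X \<union> Y) + lam (X \<inter> Y))"

definition k_separating :: "('a set \<Rightarrow> int) \<Rightarrow> int \<Rightarrow> 'a set \<Rightarrow> bool" where
  "k_separating lam k X \<longleftrightarrow> lam X \<le> k"

definition tangle :: "'a set \<Rightarrow> ('a set \<Rightarrow> int) \<Rightarrow> int \<Rightarrow> 'a set set \<Rightarrow> bool" where
  "tangle E lam k T \<longleftrightarrow> T \<subseteq> Pow E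
     \<and> (\<forall>A\<in>T. lam A < k)
     \<and> (\<forall>A. A \<subseteq> E \<longrightarrow> lam A \<le> k - 1 \<longrightarrow> A \<in> T \<or> E - A \<in> T)
     \<and> (\<forall>A\<in>T. \<forall>B\<in>T. \<forall>C\<in>T. A \<union> B \<union> C \<noteq> E)
     \<and> (\<forall>e\<in>E. E - {e} \<notin> T)"

definition T_weak :: "'a set set \<Rightarrow> 'a set \<Rightarrow> bool" where
  "T_weak T Y \<longleftrightarrow> (\<exists>A\<in>T. Y \<subseteq> A)"

definition T_strong :: "'a set set \<Rightarrow> 'a set \<Rightarrow> bool" where
  "T_strong T Y \<longleftrightarrow> \<not> T_weak T Y"

definition T_strong_sep :: "'a set \<Rightarrow> ('a set \<Rightarrow> int) \<Rightarrow> int \<Rightarrow> 'a set set \<Rightarrow> 'a set \<Rightarrow> 'a set \<Rightarrow> bool" where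
  "T_strong_sep E lam k T X Y \<longleftrightarrow> X \<union> Y = E \<and> X \<inter> Y = {} \<and> k_separating lam k X
     \<and> T_strong T X \<and> T_strong T Y"

definition fully_closed :: "'a set \<Rightarrow> ('a set \<Rightarrow> int) \<Rightarrow> int \<Rightarrow> 'a set set \<Rightarrow> 'a set \<Rightarrow> bool" where
  "fully_closed E lam k T X \<longleftrightarrow> X \<subseteq> E \<and> T_strong T X \<and> k_separating lam k X
     \<and> (\<forall>Y. Y \<subseteq> E - X \<longrightarrow> Y \<noteq> {} \<longrightarrow> T_weak T Y \<longrightarrow> \<not> k_separating lam k (X \<union> Y))"

text \<open>Full closure: intersection of all fully closed k-separating sets containing X
(taken inside E, so the empty intersection is E).\<close>
definition fcl :: "'a set \<Rightarrow> ('a set \<Rightarrow> int) \<Rightarrow> int \<Rightarrow> 'a set set \<Rightarrow> 'a set \<Rightarrow> 'a set" where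
  "fcl E lam k T X = E \<inter> \<Inter> {Z. fully_closed E lam k T Z \<and> X \<subseteq> Z}"

definition T_equivalent :: "'a set \<Rightarrow> ('a set \<Rightarrow> int) \<Rightarrow> int \<Rightarrow> 'a set set
    \<Rightarrow> 'a set \<Rightarrow> 'a set \<Rightarrow> 'a set \<Rightarrow> 'a set \<Rightarrow> bool" where
  "T_equivalent E lam k T X Y X' Y' \<longleftrightarrow>
     T_strong_sep E lam k T X Y \<and> T_strong_sep E lam k T X' Y'
     \<and> {fcl E lam k T X, fcl E lam k T Y} = {fcl E lam k T X', fcl E lam k T Y'}"

definition T_sequential :: "'a set \<Rightarrow> ('a set \<Rightarrow> int) \<Rightarrow> int \<Rightarrow> 'a set set \<Rightarrow> 'a set \<Rightarrow> bool" where
  "T_sequential E lam k T X \<longleftrightarrow> k_separating lam k X \<and> T_strong T (E - X)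
     \<and> fcl E lam k T (E - X) = E"

definition non_sequential :: "'a set \<Rightarrow> ('a set \<Rightarrow> int) \<Rightarrow> int \<Rightarrow> 'a set set \<Rightarrow> 'a set \<Rightarrow> 'a set \<Rightarrow> bool" where
  "non_sequential E lam k T X Y \<longleftrightarrow> \<not> T_sequential E lam k T X \<and> \<not> T_sequential E lam k T Y"

end

theory Submission
  imports Defs
begin

text \<open>By
submodularity and axiom (T2), a fully closed set containing a strong set \<open>X\<close> absorbs every
weak set \<open>Y\<close> for which \<open>X \<union> Y\<close> is \<open>k\<close>-separating; so adding a weak set never changes the full
closure, which gives (i), and when \<open>fcl R \<noteq> E\<close> the complement \<open>G - A\<close> stays strong, which
gives (ii). For (iii) and (iv) the key identity is \<open>fcl (E - fcl G) = fcl R\<close> whenever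
\<open>fcl G \<noteq> E\<close>, i.e. whenever \<open>R\<close> is not sequential.\<close>

lemma T_weak_subset: "T_weak T Y \<Longrightarrow> X \<subseteq> Y \<Longrightarrow> T_weak T X"
  unfolding T_weak_def by blast

lemma T_strong_superset: "T_strong T X \<Longrightarrow> X \<subseteq> Y \<Longrightarrow> T_strong T Y"
  unfolding T_strong_def using T_weak_subset by blast

lemma T_weak_if_member: "A \<in> T \<Longrightarrow> T_weak T A"
  unfolding T_weak_def by blast

lemma fcl_mono: "X \<subseteq> Y \<Longrightarrow> fcl E lam k T X \<subseteq> fcl E lam k T Y"
  unfolding fcl_def by blast

lemma fcl_least: "fully_closed E lam k T Z \<Longrightarrow> X \<subseteq> Z \<Longrightarrow> fcl E lam k T X \<subseteq> Z"
  unfolding fcl_def by blast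

lemma fcl_subset: "fcl E lam k T X \<subseteq> E"
  unfolding fcl_def by blast

lemma fcl_superset: "X \<subseteq> E \<Longrightarrow> X \<subseteq> fcl E lam k T X"
  unfolding fcl_def fully_closed_def by blast

lemma T_equivalent_sym:
  "T_equivalent E lam k T X Y X' Y' \<Longrightarrow> T_equivalent E lam k T X' Y' X Y"
  unfolding T_equivalent_def by auto

locale connectivity =
  fixes E :: "'a set" and lam :: "'a set \<Rightarrow> int"
  assumes connectivity_system: "connectivity_system E lam"
begin

lemma finite_ground: "finite E"
  using connectivity_system unfolding connectivity_system_def by blast

lemma lam_compl: "X \<subseteq> E \<Longrightarrow> lam (E - X) = lam X"
  using connectivity_system unfolding connectivity_system_def by metis

lemma submodular: "X \<subseteq> E \<Longrightarrow> Y \<subseteq> E \<Longrightarrow> lam (X \<union> Y) + lam (X \<inter> Y) \<le> lam X + lam Y"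
  using connectivity_system unfolding connectivity_system_def by blast

lemma lam_ground: "lam E = lam {}"
  using lam_compl[of E] by simp

lemma lam_empty_le:
  assumes "X \<subseteq> E"
  shows "lam {} \<le> lam X"
proof -
  have "lam (X \<union> (E - X)) + lam (X \<inter> (E - X)) \<le> lam X + lam (E - X)"
    using submodular[OF assms, of "E - X"] by blast
  moreover have "X \<union> (E - X) = E" "X \<inter> (E - X) = {}"
    using assms by auto
  ultimately show ?thesis
    using lam_ground lam_compl[OF assms] by simp
qed

lemma T_strong_sepD:
  assumes "T_strong_sep E lam k T X Y"
  shows "X \<subseteq> E" "Y = E - X" "lam X \<le> k" "lam Y \<le> k" "T_strong T X" "T_strong T Y"
proof -
  show "X \<subseteq> E" "Y = E - X"
    using assms unfolding T_strong_sep_def by auto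
  then show "lam Y \<le> k"
    using assms lam_compl[of X] unfolding T_strong_sep_def k_separating_def by simp
qed (use assms in \<open>auto simp: T_strong_sep_def k_separating_def\<close>)

lemma T_strong_sep_swap: "T_strong_sep E lam k T X Y \<Longrightarrow> T_strong_sep E lam k T Y X"
  using T_strong_sepD[of k T X Y] unfolding T_strong_sep_def k_separating_def by auto

lemma T_equivalent_swap:
  "T_equivalent E lam k T X Y X' Y' \<Longrightarrow> T_equivalent E lam k T Y X Y' X'"
  unfolding T_equivalent_def using T_strong_sep_swap by (metis insert_commute)

lemma compl_fully_closed_strong:
  assumes fc: "fully_closed E lam k T Z" and "Z \<noteq> E"
  shows "T_strong T (E - Z)"
proof (unfold T_strong_def, rule notI)
  assume "T_weak T (E - Z)"
  moreover have "Z \<subseteq> E" "lam Z \<le> k"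
    using fc unfolding fully_closed_def k_separating_def by auto
  moreover have "E - Z \<noteq> {}"
    using \<open>Z \<subseteq> E\<close> \<open>Z \<noteq> E\<close> by blast
  ultimately have "\<not> lam E \<le> k"
    using fc unfolding fully_closed_def k_separating_def by (metis Diff_partition order_refl)
  then show False
    using lam_ground lam_empty_le[OF \<open>Z \<subseteq> E\<close>] \<open>lam Z \<le> k\<close> by simp
qed

lemma obtain_fully_closed_member:
  assumes "Y0 \<in> P"
    and members: "\<And>Y. Y \<in> P \<Longrightarrow> Y \<subseteq> E \<and> T_strong T Y \<and> lam Y \<le> k"
    and extend: "\<And>Y W. Y \<in> P \<Longrightarrow> W \<subseteq> E - Y \<Longrightarrow> T_weak T W
      \<Longrightarrow> lam (Y \<union> W) \<le> k \<Longrightarrow> Y \<union> W \<in> P"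
  obtains Y where "Y \<in> P" "Y0 \<subseteq> Y" "fully_closed E lam k T Y"
proof -
  have "finite P"
    using members finite_ground by (metis Pow_iff finite_Pow_iff rev_finite_subset subsetI)
  then obtain Y where Y: "Y \<in> P" "Y0 \<subseteq> Y" and maximal: "\<forall>Y'\<in>P. Y \<subseteq> Y' \<longrightarrow> Y = Y'"
    using finite_has_maximal2[OF _ \<open>Y0 \<in> P\<close>] by blast
  have "fully_closed E lam k T Y"
    unfolding fully_closed_def k_separating_def
  proof (intro conjI allI impI)
    fix W assume W: "W \<subseteq> E - Y" "W \<noteq> {}" "T_weak T W"
    show "\<not> lam (Y \<union> W) \<le> k"
    proof
      assume "lam (Y \<union> W) \<le> k"
      then have "Y = Y \<union> W"
        using maximal extend[OF Y(1) W(1,3)] by blast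
      then show False
        using W by blast
    qed
  qed (use members[OF Y(1)] in auto)
  with Y show thesis ..
qed

end

locale connectivity_tangle = connectivity +
  fixes k :: int and T :: "'a set set"
  assumes tangle: "tangle E lam k T"
begin

lemma tangle_member_or_compl: "A \<subseteq> E \<Longrightarrow> lam A \<le> k - 1 \<Longrightarrow> A \<in> T \<or> E - A \<in> T"
  using tangle unfolding tangle_def by blast

lemma fully_closed_absorbs_weak:
  assumes fc: "fully_closed E lam k T Z" and XZ: "X \<subseteq> Z" and "T_strong T X"
    and "T_weak T Y" and "Y \<subseteq> E" and XY: "lam (X \<union> Y) \<le> k"
  shows "Y \<subseteq> Z"
proof -
  have "Z \<subseteq> E" and "lam Z \<le> k"
    and closed: "\<And>V. V \<subseteq> E - Z \<Longrightarrow> V \<noteq> {} \<Longrightarrow> T_weak T V \<Longrightarrow> \<not> lam (Z \<union> V) \<le> k"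
    using fc unfolding fully_closed_def k_separating_def by auto
  define W where "W = Z \<inter> (X \<union> Y)"
  have "W \<subseteq> E" "T_strong T W"
    using \<open>Z \<subseteq> E\<close> XZ T_strong_superset[OF \<open>T_strong T X\<close>] unfolding W_def by auto
  show ?thesis
  proof (cases "lam W \<le> k - 1")
    case True
    text \<open>Then (T2) makes \<open>E - W\<close>, and with it \<open>E - Z\<close>, weak; this forces \<open>Z = E\<close>.\<close>
    have "W \<notin> T"
      using \<open>T_strong T W\<close> T_weak_if_member unfolding T_strong_def by blast
    then have "E - W \<in> T"
      using tangle_member_or_compl[OF \<open>W \<subseteq> E\<close> True] by blast
    then have "T_weak T (E - Z)"
      by (rule T_weak_subset[OF T_weak_if_member]) (auto simp: W_def)
    then have "Z = E"
      using compl_fully_closed_strong[OF fc] unfolding T_strong_def by blast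
    then show ?thesis
      using \<open>Y \<subseteq> E\<close> by blast
  next
    case False
    have "lam (Z \<union> (X \<union> Y)) + lam W \<le> lam Z + lam (X \<union> Y)"
      using submodular[OF \<open>Z \<subseteq> E\<close>, of "X \<union> Y"] XZ \<open>Z \<subseteq> E\<close> \<open>Y \<subseteq> E\<close>
      unfolding W_def by auto
    moreover have "Z \<union> (X \<union> Y) = Z \<union> (Y - Z)"
      using XZ by blast
    ultimately have "lam (Z \<union> (Y - Z)) \<le> k"
      using \<open>lam Z \<le> k\<close> XY False by simp
    then have "Y - Z = {}"
      using closed[of "Y - Z"] T_weak_subset[OF \<open>T_weak T Y\<close>, of "Y - Z"] \<open>Y \<subseteq> E\<close> by blast
    then show ?thesis
      by blast
  qed
qed

lemma fcl_Un_weak: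
  assumes "T_strong T X" "T_weak T Y" "Y \<subseteq> E" "lam (X \<union> Y) \<le> k"
  shows "fcl E lam k T (X \<union> Y) = fcl E lam k T X"
proof -
  have "{Z. fully_closed E lam k T Z \<and> X \<union> Y \<subseteq> Z} = {Z. fully_closed E lam k T Z \<and> X \<subseteq> Z}"
    using fully_closed_absorbs_weak[OF _ _ assms] by blast
  then show ?thesis
    unfolding fcl_def by simp
qed

lemma fully_closed_fcl:
  assumes "X \<subseteq> E" "T_strong T X" "lam X \<le> k"
  shows "fully_closed E lam k T (fcl E lam k T X)"
proof -
  define P where "P = {Y. X \<subseteq> Y \<and> Y \<subseteq> E \<and> lam Y \<le> k
      \<and> (\<forall>Z. fully_closed E lam k T Z \<and> X \<subseteq> Z \<longrightarrow> Y \<subseteq> Z)}"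
  have extend: "Y \<union> W \<in> P"
    if "Y \<in> P" "W \<subseteq> E - Y" "T_weak T W" "lam (Y \<union> W) \<le> k" for Y W
  proof -
    have "X \<subseteq> Y" "Y \<subseteq> E" and below: "\<And>Z. fully_closed E lam k T Z \<Longrightarrow> X \<subseteq> Z \<Longrightarrow> Y \<subseteq> Z"
      using \<open>Y \<in> P\<close> unfolding P_def by auto
    have "W \<subseteq> Z" if "fully_closed E lam k T Z" "X \<subseteq> Z" for Z
    proof (rule fully_closed_absorbs_weak[OF \<open>fully_closed E lam k T Z\<close>])
      show "Y \<subseteq> Z" "T_strong T Y"
        using below[OF that] T_strong_superset[OF \<open>T_strong T X\<close> \<open>X \<subseteq> Y\<close>] .
    qed (use \<open>W \<subseteq> E - Y\<close> \<open>T_weak T W\<close> \<open>lam (Y \<union> W) \<le> k\<close> in auto)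
    then show ?thesis
      using that below \<open>X \<subseteq> Y\<close> \<open>Y \<subseteq> E\<close> unfolding P_def by auto
  qed
  have members: "Y \<subseteq> E \<and> T_strong T Y \<and> lam Y \<le> k" if "Y \<in> P" for Y
    using that T_strong_superset[OF \<open>T_strong T X\<close>] unfolding P_def by blast
  have "X \<in> P"
    using assms unfolding P_def by blast
  then obtain Y where "Y \<in> P" "X \<subseteq> Y" and fcY: "fully_closed E lam k T Y"
    using obtain_fully_closed_member[OF _ members extend] by blast
  have "fcl E lam k T X = Y"
  proof
    show "fcl E lam k T X \<subseteq> Y"
      using fcl_least[OF fcY \<open>X \<subseteq> Y\<close>] .
    show "Y \<subseteq> fcl E lam k T X"
      using \<open>Y \<in> P\<close> unfolding P_def fcl_def by blast
  qed
  with fcY show ?thesis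
    by simp
qed

lemma fully_closed_fcl_side:
  assumes "T_strong_sep E lam k T R G"
  shows "fully_closed E lam k T (fcl E lam k T R)" and "R \<subseteq> fcl E lam k T R"
proof -
  note R = T_strong_sepD(1,3,5)[OF assms]
  show "fully_closed E lam k T (fcl E lam k T R)"
    using fully_closed_fcl[OF R(1) R(3) R(2)] .
  show "R \<subseteq> fcl E lam k T R"
    using fcl_superset[OF R(1)] .
qed

lemma fcl_compl_Un_weak:
  assumes fcH: "fully_closed E lam k T H" and "H \<noteq> E"
    and "Y \<subseteq> H" "T_strong T Y" "lam Y \<le> k"
    and "W \<subseteq> E - Y" "T_weak T W" "lam (Y \<union> W) \<le> k"
  shows "W \<subseteq> H" and "fcl E lam k T (E - (Y \<union> W)) = fcl E lam k T (E - Y)"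
proof -
  show "W \<subseteq> H"
    using fully_closed_absorbs_weak[OF fcH] assms(3-8) by blast
  then have "E - H \<subseteq> E - (Y \<union> W)"
    using \<open>Y \<subseteq> H\<close> by blast
  then have "T_strong T (E - (Y \<union> W))"
    by (rule T_strong_superset[OF compl_fully_closed_strong[OF fcH \<open>H \<noteq> E\<close>]])
  moreover have "E - (Y \<union> W) \<union> W = E - Y"
    using \<open>W \<subseteq> E - Y\<close> by blast
  moreover have "Y \<subseteq> E"
    using \<open>Y \<subseteq> H\<close> fcH unfolding fully_closed_def by blast
  then have "lam (E - Y) \<le> k"
    using \<open>lam Y \<le> k\<close> lam_compl[of Y] by simp
  ultimately show "fcl E lam k T (E - (Y \<union> W)) = fcl E lam k T (E - Y)"
    using fcl_Un_weak[of "E - (Y \<union> W)" W] \<open>W \<subseteq> E - Y\<close> \<open>T_weak T W\<close> by auto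
qed

text \<open>The maximal \<open>k\<close>-separating set between \<open>G\<close> and \<open>fcl G\<close> whose complement has full
closure \<open>fcl R\<close> is fully closed, hence equal to \<open>fcl G\<close>.\<close>

lemma fcl_compl_fcl:
  assumes sep: "T_strong_sep E lam k T R G" and ne: "fcl E lam k T G \<noteq> E"
  shows "fcl E lam k T (E - fcl E lam k T G) = fcl E lam k T R"
proof -
  note GR = T_strong_sepD[OF T_strong_sep_swap[OF sep]]
  define H where "H = fcl E lam k T G"
  note fcH = fully_closed_fcl_side[OF T_strong_sep_swap[OF sep], folded H_def]
  have "H \<subseteq> E" "H \<noteq> E"
    using fcl_subset[of E lam k T G] ne unfolding H_def by auto
  define P where "P = {Y. G \<subseteq> Y \<and> Y \<subseteq> H \<and> lam Y \<le> k
      \<and> fcl E lam k T (E - Y) = fcl E lam k T R}"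
  have members: "Y \<subseteq> E \<and> T_strong T Y \<and> lam Y \<le> k" if "Y \<in> P" for Y
    using that \<open>H \<subseteq> E\<close> T_strong_superset[of T G] GR unfolding P_def by blast
  have extend: "Y \<union> W \<in> P"
    if "Y \<in> P" "W \<subseteq> E - Y" "T_weak T W" "lam (Y \<union> W) \<le> k" for Y W
    using fcl_compl_Un_weak[OF fcH(1) \<open>H \<noteq> E\<close> _ _ _ that(2-4)] members[OF \<open>Y \<in> P\<close>]
      \<open>Y \<in> P\<close> \<open>lam (Y \<union> W) \<le> k\<close> unfolding P_def by auto
  have "G \<in> P"
    using GR fcH(2) unfolding P_def by (simp add: double_diff)
  then obtain Y where "Y \<in> P" "G \<subseteq> Y" and fcY: "fully_closed E lam k T Y"
    using obtain_fully_closed_member[OF _ members extend] by blast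
  have "Y = H"
    using fcl_least[OF fcY \<open>G \<subseteq> Y\<close>] \<open>Y \<in> P\<close> unfolding P_def H_def by blast
  with \<open>Y \<in> P\<close> show ?thesis
    unfolding P_def H_def by blast
qed

lemma T_sequential_iff:
  assumes "T_strong_sep E lam k T R G"
  shows "T_sequential E lam k T R \<longleftrightarrow> fcl E lam k T G = E"
  using T_strong_sepD[OF assms] unfolding T_sequential_def k_separating_def by auto

lemma T_equivalent_Un_weak:
  assumes sep: "T_strong_sep E lam k T R G"
    and "A \<subseteq> G" "T_weak T A" "lam (R \<union> A) \<le> k" "T_strong T (G - A)"
  shows "T_equivalent E lam k T R G (R \<union> A) (G - A)"
proof -
  note RG = T_strong_sepD[OF sep]
  have "A \<subseteq> E"
    using \<open>A \<subseteq> G\<close> RG(2) by blast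
  have "T_strong T (R \<union> A)"
    using T_strong_superset[OF RG(5)] by blast
  then have "T_strong_sep E lam k T (R \<union> A) (G - A)"
    using assms RG(1,2) unfolding T_strong_sep_def k_separating_def by blast
  moreover have "fcl E lam k T (R \<union> A) = fcl E lam k T R"
    using fcl_Un_weak[OF RG(5)] assms \<open>A \<subseteq> E\<close> by blast
  moreover have "G - A \<union> A = G"
    using \<open>A \<subseteq> G\<close> by blast
  then have "fcl E lam k T (G - A) = fcl E lam k T G"
    using fcl_Un_weak[of "G - A" A] assms \<open>A \<subseteq> E\<close> RG(4) by simp
  ultimately show ?thesis
    using sep unfolding T_equivalent_def by simp
qed

lemma T_strong_diff_weak:
  assumes sep: "T_strong_sep E lam k T R G" and ne: "fcl E lam k T R \<noteq> E"
    and "A \<subseteq> G" "T_weak T A" "lam (R \<union> A) \<le> k"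
  shows "T_strong T (G - A)"
proof -
  note RG = T_strong_sepD[OF sep]
  note fcF = fully_closed_fcl_side[OF sep]
  have "A \<subseteq> fcl E lam k T R"
    using fully_closed_absorbs_weak[OF fcF RG(5)] assms RG(2) by blast
  then have "E - fcl E lam k T R \<subseteq> G - A"
    using fcF(2) RG(2) by blast
  then show ?thesis
    by (rule T_strong_superset[OF compl_fully_closed_strong[OF fcF(1) ne]])
qed

lemma T_equivalent_between:
  assumes sep: "T_strong_sep E lam k T R G" and ne: "fcl E lam k T G \<noteq> E"
    and "lam X \<le> k" and lower: "E - fcl E lam k T G \<subseteq> X" and upper: "X \<subseteq> R"
  shows "T_equivalent E lam k T X (E - X) R G"
proof -
  note RG = T_strong_sepD[OF sep]
  note fcH = fully_closed_fcl_side[OF T_strong_sep_swap[OF sep]]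
  have "T_strong T X"
    using lower by (rule T_strong_superset[OF compl_fully_closed_strong[OF fcH(1) ne]])
  moreover have "G \<subseteq> E - X"
    using upper RG(2) by blast
  then have "T_strong T (E - X)"
    by (rule T_strong_superset[OF RG(6)])
  ultimately have "T_strong_sep E lam k T X (E - X)"
    using upper RG(1) \<open>lam X \<le> k\<close> unfolding T_strong_sep_def k_separating_def by blast
  moreover have "fcl E lam k T X = fcl E lam k T R"
    using fcl_mono[OF lower] fcl_mono[OF upper] fcl_compl_fcl[OF sep ne] by blast
  moreover have "fcl E lam k T (E - X) = fcl E lam k T G"
  proof
    show "fcl E lam k T (E - X) \<subseteq> fcl E lam k T G"
      using lower by (intro fcl_least[OF fcH(1)]) blast
    show "fcl E lam k T G \<subseteq> fcl E lam k T (E - X)"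
      using \<open>G \<subseteq> E - X\<close> by (rule fcl_mono)
  qed
  ultimately show ?thesis
    using sep unfolding T_equivalent_def by simp
qed

lemma T_equivalent_fcl:
  assumes sep: "T_strong_sep E lam k T R G" and ne: "fcl E lam k T R \<noteq> E"
  shows "T_equivalent E lam k T (fcl E lam k T R) (E - fcl E lam k T R) R G"
proof -
  define F where "F = fcl E lam k T R"
  have "fully_closed E lam k T F" "R \<subseteq> F" "F \<subseteq> E"
    using fully_closed_fcl_side[OF sep] fcl_subset[of E lam k T R] unfolding F_def by auto
  then have "lam (E - F) \<le> k"
    using lam_compl[of F] unfolding fully_closed_def k_separating_def by simp
  moreover have "E - F \<subseteq> G"
    using \<open>R \<subseteq> F\<close> T_strong_sepD(2)[OF sep] by blast
  ultimately have "T_equivalent E lam k T (E - F) (E - (E - F)) G R"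
    using T_equivalent_between[OF T_strong_sep_swap[OF sep]] ne unfolding F_def by blast
  moreover have "E - (E - F) = F"
    using \<open>F \<subseteq> E\<close> by blast
  ultimately show ?thesis
    using T_equivalent_swap unfolding F_def by metis
qed

end

theorem lemma3p8:
  fixes E :: "'a set" and lam :: "'a set \<Rightarrow> int" and k :: int and T :: "'a set set"
    and R G :: "'a set"
  assumes cs: "connectivity_system E lam"
    and tg: "tangle E lam k T"
    and sep: "T_strong_sep E lam k T R G"
  shows
    "(\<forall>A. A \<subseteq> G \<longrightarrow> A \<noteq> {} \<longrightarrow> T_weak T A \<longrightarrow> k_separating lam k (R \<union> A)
        \<longrightarrow> T_strong T (G - A) \<longrightarrow> T_equivalent E lam k T R G (R \<union> A) (G - A))
   \<and> (non_sequential E lam k T R G \<longrightarrow>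
        (\<forall>A. A \<subseteq> G \<longrightarrow> A \<noteq> {} \<longrightarrow> T_weak T A \<longrightarrow> k_separating lam k (R \<union> A)
           \<longrightarrow> T_equivalent E lam k T (R \<union> A) (G - A) R G))
   \<and> (non_sequential E lam k T R G \<longrightarrow>
        T_equivalent E lam k T (fcl E lam k T R) (E - fcl E lam k T R) R G)
   \<and> (non_sequential E lam k T R G \<longrightarrow>
        (\<forall>X. k_separating lam k X \<longrightarrow> E - fcl E lam k T G \<subseteq> X \<longrightarrow> X \<subseteq> R
           \<longrightarrow> T_equivalent E lam k T X (E - X) R G))"
proof -
  interpret connectivity_tangle E lam k T
    using cs tg by unfold_locales
  have non_sequential_iff:
    "non_sequential E lam k T R G \<longleftrightarrow> fcl E lam k T G \<noteq> E \<and> fcl E lam k T R \<noteq> E"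
    using T_sequential_iff[OF sep] T_sequential_iff[OF T_strong_sep_swap[OF sep]]
    unfolding non_sequential_def by blast
  have part_ii: "T_equivalent E lam k T (R \<union> A) (G - A) R G"
    if "fcl E lam k T R \<noteq> E" "A \<subseteq> G" "T_weak T A" "lam (R \<union> A) \<le> k" for A
    using T_strong_diff_weak[OF sep that]
    by (rule T_equivalent_sym[OF T_equivalent_Un_weak[OF sep that(2-4)]])
  show ?thesis
    unfolding non_sequential_iff k_separating_def
    using T_equivalent_Un_weak[OF sep] part_ii T_equivalent_fcl[OF sep]
      T_equivalent_between[OF sep]
    by blast
qed

end
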